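(* Let $G$ be a simple connected graph with $n\ge 3$ vertices and $m$ edges, and let $c=m-n+1$. If $c\le (n-1)/2$, then $$\rho_{ABC}(G)\le \sqrt{n-2+\frac{2c}{n-1}}.$$
   Context: For a simple connected graph $G$ with vertex set $\{v_1,\dots,v_n\}$ and degrees $d_i$, the ABC matrix is $M(G)=(m_{ij})_{n\times n}$ with $m_{ij}=\sqrt{(d_i+d_j-2)/(d_id_j)}$ if $v_iv_j$ is an edge and $m_{ij}=0$ otherwise. The ABC spectral radius $\rho_{ABC}(G)$ is the largest eigenvalue of $M(G)$. A connected graph with $n$ vertices and $m$ edges is called $c$-cyclic where $c=m-n+1$. *)

theory Defs
  imports "HOL-Analysis.Analysis"
begin

definition simple_graph :: "('n::finite \<Rightarrow> 'n \<Rightarrow> bool) \<Rightarrow> bool" where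
  "simple_graph E \<longleftrightarrow> (\<forall>u v. E u v \<longrightarrow> E v u) \<and> (\<forall>v. \<not> E v v)"

definition connected_graph :: "('n::finite \<Rightarrow> 'n \<Rightarrow> bool) \<Rightarrow> bool" where
  "connected_graph E \<longleftrightarrow> (\<forall>u v. E\<^sup>*\<^sup>* u v)"

definition degree :: "('n::finite \<Rightarrow> 'n \<Rightarrow> bool) \<Rightarrow> 'n \<Rightarrow> nat" where
  "degree E v = card {u. E v u}"

definition num_edges :: "('n::finite \<Rightarrow> 'n \<Rightarrow> bool) \<Rightarrow> nat" where
  "num_edges E = card {{u, v} | u v. E u v}"

definition abc_matrix :: "('n::finite \<Rightarrow> 'n \<Rightarrow> bool) \<Rightarrow> real^'n^'n" where
  "abc_matrix E = (\<chi> i j. if E i j then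
      sqrt ((real (degree E i) + real (degree E j) - 2) / (real (degree E i) * real (degree E j)))
      else 0)"

definition eigenvalues :: "real^'n^'n \<Rightarrow> real set" where
  "eigenvalues M = {\<mu>. \<exists>x. x \<noteq> 0 \<and> M *v x = \<mu> *\<^sub>R x}"

definition abc_spectral_radius :: "('n::finite \<Rightarrow> 'n \<Rightarrow> bool) \<Rightarrow> real" where
  "abc_spectral_radius E = Max (eigenvalues (abc_matrix E))"

end

theory Submission
  imports Defs
begin

text \<open>
  Let x be an eigenvector of the largest ABC eigenvalue \<rho> and choose a vertex i maximising
  |x_j| / sqrt d_j. Since the entry m_ij sqrt d_j equals sqrt (d_i + d_j - 2) / sqrt d_i, the
  eigenvalue equation at i gives \<rho> d_i \<le> \<Sum>_{j~i} sqrt (d_i + d_j - 2), and Cauchy-Schwarz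
  turns this into \<rho>^2 d_i \<le> d_i (d_i - 2) + s_i, where s_i is the degree sum of the neighbours
  of i. Now s_i \<le> d_i (n - 1), and by the handshake lemma, since every other vertex has degree
  at least 1, s_i \<le> 2m - n + 1 = n - 1 + 2c. Distinguishing whether (d_i - 1)(n - 1) \<le> 2c
  yields \<rho>^2 \<le> n - 2 + 2c/(n - 1).
\<close>

lemma symmetric_matrix_inner_commute:
  fixes M :: "real^'n^'n"
  assumes "transpose M = M"
  shows "(M *v x) \<bullet> y = x \<bullet> (M *v y)"
  by (metis assms dot_lmul_matrix transpose_matrix_vector)

lemma psd_quadratic_form_eq_0_imp_eq_0:
  fixes A :: "real^'n^'n"
  assumes sym: "transpose A = A" and psd: "\<And>y. 0 \<le> y \<bullet> (A *v y)"
    and zero: "x \<bullet> (A *v x) = 0"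
  shows "A *v x = 0"
proof -
  define z where "z = A *v x"
  define a where "a = z \<bullet> z"
  define b where "b = z \<bullet> (A *v z)"
  have quadratic: "0 \<le> t^2 * b - 2 * t * a" for t
  proof -
    have "0 \<le> (x - t *\<^sub>R z) \<bullet> (A *v (x - t *\<^sub>R z))" by (rule psd)
    also have "\<dots> = t^2 * b - 2 * t * a"
      using zero symmetric_matrix_inner_commute[OF sym, of x z]
      by (simp add: z_def a_def b_def inner_commute power2_eq_square algebra_simps)
    finally show ?thesis .
  qed
  \<comment> \<open>with a = t (b + 1) the quadratic above equals -t^2 (b + 2)\<close>
  define t where "t = a / (b + 1)"
  have "b \<ge> 0" unfolding b_def by (rule psd)
  then have "a = t * (b + 1)" by (simp add: t_def)
  then have "t^2 * (b + 2) \<le> 0" using quadratic[of t] by (simp add: power2_eq_square algebra_simps)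
  with \<open>b \<ge> 0\<close> have "t = 0" by (simp add: mult_le_0_iff)
  with \<open>a = t * (b + 1)\<close> show ?thesis by (simp add: a_def z_def)
qed

lemma symmetric_matrix_eigenvalues_nonempty:
  fixes M :: "real^'n^'n"
  assumes sym: "transpose M = M"
  shows "eigenvalues M \<noteq> {}"
proof -
  define f where "f y = y \<bullet> (M *v y)" for y :: "real^'n"
  have "continuous_on (sphere 0 1) f" unfolding f_def
    by (intro continuous_intros matrix_vector_mult_linear_continuous_on)
  then obtain x where x: "x \<in> sphere 0 1" and max: "\<And>y. y \<in> sphere 0 1 \<Longrightarrow> f y \<le> f x"
    using continuous_attains_sup[OF compact_sphere, of 0 1 f] by auto
  \<comment> \<open>x maximises the Rayleigh quotient, so the form of A is nonnegative and vanishes at x\<close>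
  define A where "A = f x *\<^sub>R mat 1 - M"
  have A_form: "y \<bullet> (A *v y) = f x * (y \<bullet> y) - f y" for y
    by (simp add: A_def f_def matrix_vector_mult_diff_rdistrib
        scaleR_matrix_vector_assoc[symmetric] inner_diff_right)
  have "transpose A = A"
    using sym by (simp add: A_def transpose_def vec_eq_iff mat_def)
  moreover have "0 \<le> y \<bullet> (A *v y)" for y
  proof (cases "y = 0")
    case False
    then have "f (y /\<^sub>R norm y) \<le> f x" by (intro max) simp
    then have "f y / (norm y)^2 \<le> f x"
      by (simp add: f_def matrix_vector_mult_scaleR power2_eq_square field_simps)
    then show ?thesis using False by (simp add: A_form dot_square_norm field_simps)
  qed simp
  moreover have "x \<bullet> (A *v x) = 0"
    using x by (simp add: A_form dot_square_norm)
  ultimately have "A *v x = 0" by (rule psd_quadratic_form_eq_0_imp_eq_0)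
  then have "M *v x = f x *\<^sub>R x"
    by (simp add: A_def matrix_vector_mult_diff_rdistrib scaleR_matrix_vector_assoc[symmetric])
  moreover have "x \<noteq> 0" using x by auto
  ultimately show ?thesis unfolding eigenvalues_def by blast
qed

lemma symmetric_matrix_finite_eigenvalues:
  fixes M :: "real^'n^'n"
  assumes sym: "transpose M = M"
  shows "finite (eigenvalues M)"
proof -
  define v where "v \<mu> = (SOME x. x \<noteq> 0 \<and> M *v x = \<mu> *\<^sub>R x)" for \<mu>
  have v: "v \<mu> \<noteq> 0" "M *v v \<mu> = \<mu> *\<^sub>R v \<mu>" if "\<mu> \<in> eigenvalues M" for \<mu>
    using someI_ex[OF that[unfolded eigenvalues_def mem_Collect_eq]] by (simp_all add: v_def)
  have "inj_on v (eigenvalues M)"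
    by (rule inj_onI) (metis v scaleR_cancel_right)
  moreover have "pairwise orthogonal (v ` eigenvalues M)"
  proof (rule pairwise_imageI)
    fix p q assume pq: "p \<in> eigenvalues M" "q \<in> eigenvalues M" "v p \<noteq> v q"
    have "p * (v p \<bullet> v q) = q * (v p \<bullet> v q)"
      using symmetric_matrix_inner_commute[OF sym, of "v p" "v q"] v pq by simp
    then show "orthogonal (v p) (v q)" using pq by (auto simp: orthogonal_def)
  qed
  moreover have "0 \<notin> v ` eigenvalues M" using v by auto
  ultimately show ?thesis
    using pairwise_orthogonal_independent finiteI_independent finite_imageD by blast
qed

lemma degree_pos_if_adjacent: "E v u \<Longrightarrow> 0 < degree E v"
  unfolding degree_def by (auto simp: card_gt_0_iff)

lemma connected_graph_degree_pos:
  fixes E :: "'n::finite \<Rightarrow> 'n \<Rightarrow> bool"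
  assumes "connected_graph E" and "CARD('n) \<ge> 2"
  shows "0 < degree E v"
proof -
  have "UNIV \<noteq> {v}"
  proof
    assume "UNIV = {v}"
    then have "CARD('n) = card {v}" by (simp only:)
    with assms(2) show False by simp
  qed
  then obtain u :: 'n where "u \<noteq> v" by blast
  moreover have "E\<^sup>*\<^sup>* v u" using assms(1) by (simp add: connected_graph_def)
  ultimately obtain w where "E v w" by (metis converse_rtranclpE)
  then show ?thesis by (rule degree_pos_if_adjacent)
qed

lemma degree_le_card_minus_one:
  fixes E :: "'n::finite \<Rightarrow> 'n \<Rightarrow> bool"
  assumes "simple_graph E"
  shows "degree E v \<le> CARD('n) - 1"
proof -
  have "{u. E v u} \<subseteq> UNIV - {v}" using assms by (auto simp: simple_graph_def)
  then have "card {u. E v u} \<le> card (UNIV - {v})" by (intro card_mono) auto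
  then show ?thesis by (simp add: degree_def card_Diff_singleton)
qed

lemma sum_degree_eq_twice_num_edges:
  fixes E :: "'n::finite \<Rightarrow> 'n \<Rightarrow> bool"
  assumes "simple_graph E"
  shows "(\<Sum>v\<in>UNIV. degree E v) = 2 * num_edges E"
proof -
  define Ed where "Ed = {{u, v} | u v. E u v}"
  have "card {e \<in> Ed. v \<in> e} = degree E v" for v
  proof -
    have "{e \<in> Ed. v \<in> e} = (\<lambda>u. {v, u}) ` {u. E v u}"
      using assms by (auto simp: Ed_def simple_graph_def insert_commute)
    moreover have "inj_on (\<lambda>u. {v, u}) {u. E v u}" by (auto simp: inj_on_def doubleton_eq_iff)
    ultimately show ?thesis by (simp add: card_image degree_def)
  qed
  moreover have "card {v \<in> UNIV. v \<in> e} = 2" if "e \<in> Ed" for e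
    using that assms by (fastforce simp: Ed_def simple_graph_def card_2_iff)
  moreover have "(\<Sum>e\<in>Ed. card {v \<in> UNIV. v \<in> e}) = (\<Sum>v\<in>UNIV. card {e \<in> Ed. v \<in> e})"
    by (rule sum_multicount_gen) auto
  ultimately show ?thesis by (simp add: num_edges_def Ed_def)
qed

lemma sum_neighbour_degrees_le:
  fixes E :: "'n::finite \<Rightarrow> 'n \<Rightarrow> bool"
  assumes "simple_graph E" and "\<And>v. 0 < degree E v"
  shows "(\<Sum>j | E i j. degree E j) + CARD('n) \<le> 2 * num_edges E + 1"
proof -
  define N where "N = {j. E i j}"
  define R where "R = UNIV - insert i N"
  have "i \<notin> N" using assms(1) by (simp add: N_def simple_graph_def)
  have split: "(\<Sum>j\<in>UNIV. g j) = g i + (\<Sum>j\<in>N. g j) + (\<Sum>j\<in>R. g j)" for g :: "'n \<Rightarrow> nat"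
  proof -
    have "insert i (N \<union> R) = UNIV" "i \<notin> N \<union> R" "N \<inter> R = {}"
      using \<open>i \<notin> N\<close> by (auto simp: R_def)
    then show ?thesis by (metis sum.insert sum.union_disjoint finite add.assoc)
  qed
  have "CARD('n) = 1 + degree E i + card R"
    using split[of "\<lambda>_. 1"] by (simp add: N_def degree_def)
  moreover have "card R \<le> (\<Sum>j\<in>R. degree E j)"
    unfolding card_eq_sum by (rule sum_mono) (simp add: Suc_le_eq assms(2))
  ultimately show ?thesis
    using split[of "degree E"] sum_degree_eq_twice_num_edges[OF assms(1)] by (simp add: N_def)
qed

lemma abc_matrix_symmetric:
  assumes "simple_graph E"
  shows "transpose (abc_matrix E) = abc_matrix E"
  using assms unfolding simple_graph_def abc_matrix_def transpose_def
  by (auto simp: vec_eq_iff algebra_simps)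

lemma abc_matrix_nonneg: "0 \<le> abc_matrix E $ i $ j"
proof -
  have "0 \<le> (real (degree E i) + real (degree E j) - 2) / (real (degree E i) * real (degree E j))"
    if "E i j"
    using that degree_pos_if_adjacent[of E i j]
    \<comment> \<open>no symmetry of E needed: if degree E j = 0 the quotient is 0 since x / 0 = 0\<close>
    by (cases "degree E j = 0") (auto intro!: divide_nonneg_pos)
  then show ?thesis by (simp add: abc_matrix_def)
qed

lemma abc_matrix_mult_sqrt_degree:
  assumes "simple_graph E" and "E i j"
  shows "abc_matrix E $ i $ j * sqrt (degree E j)
    = sqrt (real (degree E i) + real (degree E j) - 2) / sqrt (degree E i)"
proof -
  have "E j i" using assms by (simp add: simple_graph_def)
  then have "degree E i \<noteq> 0" "degree E j \<noteq> 0"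
    using assms(2) degree_pos_if_adjacent by (metis not_gr0)+
  then have "(real (degree E i) + real (degree E j) - 2) / (real (degree E i) * real (degree E j))
      * real (degree E j) = (real (degree E i) + real (degree E j) - 2) / real (degree E i)"
    by simp
  then show ?thesis
    using assms(2) by (simp add: abc_matrix_def real_sqrt_mult[symmetric] real_sqrt_divide[symmetric])
qed

lemma abc_eigenvalue_abs_mult_degree_le:
  fixes E :: "'n::finite \<Rightarrow> 'n \<Rightarrow> bool"
  assumes sg: "simple_graph E" and deg_pos: "\<And>v. 0 < degree E v"
    and eig: "abc_matrix E *v x = \<mu> *\<^sub>R x" and "x \<noteq> 0"
  obtains i where
    "\<bar>\<mu>\<bar> * degree E i \<le> (\<Sum>j | E i j. sqrt (real (degree E i) + real (degree E j) - 2))"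
proof -
  define M where "M = abc_matrix E"
  define w where "w j = sqrt (degree E j)" for j
  have w_pos: "0 < w j" for j using deg_pos[of j] by (simp add: w_def)
  define f where "f j = \<bar>x $ j\<bar> / w j" for j
  obtain i where "f i = Max (range f)"
    by (metis Max_in finite finite_imageI imageE UNIV_not_empty image_is_empty)
  then have f_max: "f j \<le> f i" for j by simp
  define r where "r = f i"
  obtain j0 where "x $ j0 \<noteq> 0" using \<open>x \<noteq> 0\<close> by (metis vec_eq_iff zero_index)
  then have "0 < f j0" using w_pos[of j0] by (simp add: f_def)
  with f_max[of j0] have "0 < r" by (simp add: r_def)
  have x_le: "\<bar>x $ j\<bar> \<le> r * w j" for j
    using f_max[of j] w_pos[of j] by (simp add: r_def f_def pos_divide_le_eq)
  have x_i: "\<bar>x $ i\<bar> = r * w i" using w_pos[of i] by (simp add: r_def f_def)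
  have "\<bar>\<mu>\<bar> * \<bar>x $ i\<bar> = \<bar>\<Sum>j\<in>UNIV. M $ i $ j * x $ j\<bar>"
    using arg_cong[OF eig, of "\<lambda>y. \<bar>y $ i\<bar>"]
    by (simp add: M_def matrix_vector_mult_def abs_mult)
  also have "\<dots> \<le> (\<Sum>j\<in>UNIV. M $ i $ j * \<bar>x $ j\<bar>)"
    using sum_abs[of "\<lambda>j. M $ i $ j * x $ j" UNIV] by (simp add: abs_mult M_def abc_matrix_nonneg)
  also have "\<dots> \<le> (\<Sum>j\<in>UNIV. M $ i $ j * (r * w j))"
    by (intro sum_mono mult_left_mono x_le) (simp add: M_def abc_matrix_nonneg)
  also have "\<dots> = r * (\<Sum>j\<in>UNIV. if E i j then M $ i $ j * w j else 0)"
    by (auto simp: sum_distrib_left M_def abc_matrix_def intro!: sum.cong)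
  also have "\<dots> = r * (\<Sum>j | E i j. M $ i $ j * w j)"
    by (simp add: sum.inter_filter[of UNIV, symmetric])
  also have "\<dots> = r * (\<Sum>j | E i j. sqrt (real (degree E i) + real (degree E j) - 2)) / w i"
    by (simp add: M_def w_def abc_matrix_mult_sqrt_degree[OF sg] sum_divide_distrib[symmetric])
  finally have
    "\<bar>\<mu>\<bar> * w i * w i \<le> (\<Sum>j | E i j. sqrt (real (degree E i) + real (degree E j) - 2))"
    using \<open>0 < r\<close> w_pos[of i] by (simp add: x_i pos_le_divide_eq algebra_simps)
  moreover have "w i * w i = degree E i" by (simp add: w_def)
  ultimately show ?thesis by (intro that) (simp add: mult.assoc)
qed

lemma abc_eigenvalue_square_mult_degree_le:
  fixes E :: "'n::finite \<Rightarrow> 'n \<Rightarrow> bool"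
  assumes "simple_graph E" and deg_pos: "\<And>v. 0 < degree E v"
    and "abc_matrix E *v x = \<mu> *\<^sub>R x" and "x \<noteq> 0"
  obtains i where "\<mu>^2 * degree E i
    \<le> real (degree E i) * (real (degree E i) - 2) + (\<Sum>j | E i j. real (degree E j))"
proof -
  obtain i where bound:
    "\<bar>\<mu>\<bar> * degree E i \<le> (\<Sum>j | E i j. sqrt (real (degree E i) + real (degree E j) - 2))"
    using abc_eigenvalue_abs_mult_degree_le assms by blast
  define d where "d = real (degree E i)"
  define a where "a j = d + real (degree E j) - 2" for j
  have "0 \<le> a j" for j using deg_pos[of i] deg_pos[of j] by (simp add: a_def d_def)
  have card_N: "real (card {j. E i j}) = d" by (simp add: d_def degree_def)
  have "(\<bar>\<mu>\<bar> * d)^2 \<le> (\<Sum>j | E i j. sqrt (a j))^2"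
    using bound by (intro power_mono) (simp_all add: a_def d_def)
  also have "\<dots> \<le> (\<Sum>j | E i j. sqrt (a j)^2) * card {j. E i j}"
    by (rule sum_squared_le_sum_of_squares)
  also have "\<dots> = (d * (d - 2) + (\<Sum>j | E i j. real (degree E j))) * d"
    using \<open>\<And>j. 0 \<le> a j\<close> card_N by (simp add: a_def sum.distrib sum_subtractf algebra_simps)
  finally have "(\<mu>^2 * d) * d \<le> (d * (d - 2) + (\<Sum>j | E i j. real (degree E j))) * d"
    by (simp add: power2_eq_square algebra_simps)
  then show ?thesis using deg_pos[of i] by (intro that) (simp add: d_def)
qed

lemma vertex_bound_le_cyclomatic_bound:
  fixes d s n c :: real
  assumes "1 \<le> d" "d \<le> n - 1" "s \<le> d * (n - 1)" "s \<le> n - 1 + 2 * c"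
  shows "d * (d - 2) + s \<le> (n - 2 + 2 * c / (n - 1)) * d"
proof -
  have "0 < n - 1" using assms(1,2) by simp
  have "(n - 1) * (d * (d - 2) + s) \<le> (n - 1) * (n - 2) * d + 2 * c * d"
  proof (cases "(d - 1) * (n - 1) \<le> 2 * c")
    case True
    have "(n - 1) * s \<le> (n - 1) * (d * (n - 1))"
      using assms(3) \<open>0 < n - 1\<close> by simp
    moreover have "0 \<le> d * (2 * c - (d - 1) * (n - 1))"
      using True assms(1) by simp
    ultimately show ?thesis by (simp add: algebra_simps)
  next
    case False
    have "(n - 1) * s \<le> (n - 1) * (n - 1 + 2 * c)"
      using assms(4) \<open>0 < n - 1\<close> by simp
    moreover have "((d - 1) * (n - 1) - 2 * c) * (d - (n - 1)) \<le> 0"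
      using False assms(2) by (intro mult_nonneg_nonpos) auto
    ultimately show ?thesis by (simp add: algebra_simps)
  qed
  also have "\<dots> = (n - 1) * ((n - 2 + 2 * c / (n - 1)) * d)"
    using \<open>0 < n - 1\<close> by (simp add: field_simps)
  finally show ?thesis using \<open>0 < n - 1\<close> by simp
qed

lemma abc_eigenvalue_square_le_cyclomatic_bound:
  fixes E :: "'n::finite \<Rightarrow> 'n \<Rightarrow> bool"
  assumes sg: "simple_graph E" and "connected_graph E" and "CARD('n) \<ge> 2"
    and "abc_matrix E *v x = \<mu> *\<^sub>R x" and "x \<noteq> 0"
  shows "\<mu>^2 \<le> real CARD('n) - 2
    + 2 * (real (num_edges E) - real CARD('n) + 1) / (real CARD('n) - 1)"
proof -
  let ?n = "real CARD('n)" and ?c = "real (num_edges E) - real CARD('n) + 1"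
  have deg_pos: "0 < degree E v" for v
    using connected_graph_degree_pos assms(2,3) by blast
  have deg_le: "real (degree E v) \<le> ?n - 1" for v
    using of_nat_mono[OF degree_le_card_minus_one[OF sg, of v]] assms(3) by (simp add: of_nat_diff)
  obtain i where i: "\<mu>^2 * degree E i
      \<le> real (degree E i) * (real (degree E i) - 2) + (\<Sum>j | E i j. real (degree E j))"
    using abc_eigenvalue_square_mult_degree_le[OF sg deg_pos] assms(4,5) by blast
  have "(\<Sum>j | E i j. real (degree E j)) \<le> real (card {j. E i j}) * (?n - 1)"
    by (rule sum_bounded_above) (rule deg_le)
  then have s_le_d: "(\<Sum>j | E i j. real (degree E j)) \<le> real (degree E i) * (?n - 1)"
    by (simp add: degree_def)
  have s_le_c: "(\<Sum>j | E i j. real (degree E j)) \<le> ?n - 1 + 2 * ?c"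
    using of_nat_mono[where 'a=real, OF sum_neighbour_degrees_le[OF sg deg_pos, of i]] by simp
  have "1 \<le> real (degree E i)" using deg_pos[of i] by simp
  from vertex_bound_le_cyclomatic_bound[OF this deg_le s_le_d s_le_c]
  have "\<mu>^2 * degree E i \<le> (?n - 2 + 2 * ?c / (?n - 1)) * degree E i"
    using i by linarith
  then show ?thesis using deg_pos[of i] by simp
qed

theorem corollary2p2:
  fixes E :: "'n::finite \<Rightarrow> 'n \<Rightarrow> bool"
  assumes "simple_graph E" and "connected_graph E"
    and "CARD('n) \<ge> 3"
    and "real (num_edges E) - real CARD('n) + 1 \<le> (real CARD('n) - 1) / 2"
  shows "abc_spectral_radius E \<le>
    sqrt (real CARD('n) - 2 + 2 * (real (num_edges E) - real CARD('n) + 1) / (real CARD('n) - 1))"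
proof -
  have sym: "transpose (abc_matrix E) = abc_matrix E" by (rule abc_matrix_symmetric[OF assms(1)])
  have "abc_spectral_radius E \<in> eigenvalues (abc_matrix E)" unfolding abc_spectral_radius_def
    using symmetric_matrix_finite_eigenvalues[OF sym] symmetric_matrix_eigenvalues_nonempty[OF sym]
    by (rule Max_in)
  then obtain x where "x \<noteq> 0" "abc_matrix E *v x = abc_spectral_radius E *\<^sub>R x"
    unfolding eigenvalues_def by blast
  then have "(abc_spectral_radius E)^2 \<le> real CARD('n) - 2
      + 2 * (real (num_edges E) - real CARD('n) + 1) / (real CARD('n) - 1)"
    using abc_eigenvalue_square_le_cyclomatic_bound[OF assms(1,2)] assms(3) by simp
  then show ?thesis by (rule real_le_rsqrt)
qed

end
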